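(* Let $l:\mathbb{R}^p\to\mathbb{R}$ be a convex and differentiable function, let $\lambda_1\ge\lambda_2\ge\dots\ge\lambda_p\ge 0$ be arbitrary, and let $$\hat b\in\operatorname{argmin}_{b\in\mathbb{R}^p}\Big\{l(b)+\sum_{i=1}^p\lambda_i|b|_{(i)}\Big\}.$$ Let $R=\#\{i:\hat b_i\neq 0\}$, $U(b)=-\nabla l(b)$, and for $a>0$ let $T(a)=U(\hat b)+a\hat b$. Then for any $a>0$ and any $r\in\{1,\dots,p\}$, $$R=r \iff T(a)\in H_r.$$
   Context: $|w|_{(1)}\ge\dots\ge|w|_{(p)}$ denote the ordered absolute values of the entries of $w\in\mathbb{R}^p$. For $r\in\{1,\dots,p\}$, $$H_r=\Big\{w\in\mathbb{R}^p:\ \forall_{j\le r}\ \sum_{i=j}^r\lambda_i<\sum_{i=j}^r|w|_{(i)}\ \text{ and }\ \forall_{j\ge r+1}\ \sum_{i=r+1}^j\lambda_i\ge\sum_{i=r+1}^j|w|_{(i)}\Big\}.$$ *)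

theory Defs
  imports "HOL-Analysis.Analysis" "HOL-Library.Multiset"
begin

definition ord_abs :: "real^'n \<Rightarrow> nat \<Rightarrow> real" where
  "ord_abs w i = rev (sorted_list_of_multiset (image_mset (\<lambda>j. \<bar>w $ j\<bar>) (mset_set (UNIV :: 'n set)))) ! (i - 1)"

definition slope_pen :: "(nat \<Rightarrow> real) \<Rightarrow> real^'n \<Rightarrow> real" where
  "slope_pen lam b = (\<Sum>i=1..CARD('n). lam i * ord_abs b i)"

definition H_set :: "(nat \<Rightarrow> real) \<Rightarrow> nat \<Rightarrow> (real^'n) set" where
  "H_set lam r = {w. (\<forall>j\<in>{1..r}. (\<Sum>i=j..r. lam i) < (\<Sum>i=j..r. ord_abs w i))
                    \<and> (\<forall>j\<in>{r+1..CARD('n)}. (\<Sum>i=r+1..j. lam i) \<ge> (\<Sum>i=r+1..j. ord_abs w i))}"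

end

theory Submission
  imports Defs
begin

(*
  Write T_k(w) for the sum of the k largest absolute entries of w. Summation by parts writes the
  SLOPE penalty J as a combination of the T_k with the nonnegative coefficients lam_k - lam_(k+1)
  and lam_p, so J is convex and monotone in each T_k. Since bhat minimises l + J, the vector
  U = -grad l(bhat) is a subgradient of J at bhat; this uses only the differentiability of l.
  Testing the subgradient inequality with small perturbations of bhat gives U_j bhat_j >= 0, and,
  by moving mass off S - K and onto K - S for the support S and any index set K,
    sum_(K - S) |U_j| - sum_(S - K) |U_j|
      <= sum of lam_i over |S| < i <= |S| + |K - S|  -  sum of lam_i over |S| - |S - K| < i <= |S|.
  For w = U + a bhat the sign condition gives |w_j| = |U_j| + a |bhat_j|, which makes the
  corresponding inequality for w strict as soon as S is not contained in K. As the weights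
  decrease, these exchange inequalities compare the sorted partial sums of |w| with those of lam
  exactly as required by H_|S|. The sets H_r are pairwise disjoint, and if bhat = 0 the exchange
  inequality for a set K of size r shows that w lies in no H_r.
*)

section \<open>Sums of the largest entries\<close>

(* ord_abs w i is the entry of index i - 1 of desc_list (\<lambda>j. \<bar>w $ j\<bar>). *)
definition desc_list :: "('a::finite \<Rightarrow> real) \<Rightarrow> real list" where
  "desc_list v = rev (sorted_list_of_multiset (image_mset v (mset_set UNIV)))"

definition top_sum :: "('a::finite \<Rightarrow> real) \<Rightarrow> nat \<Rightarrow> real" where
  "top_sum v k = sum_list (take k (desc_list v))"

lemma desc_list_enumeration:
  obtains ys where "distinct ys" "set ys = (UNIV :: 'a::finite set)"
    "sorted_wrt (\<ge>) (map v ys)" "desc_list v = map v ys"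
proof -
  obtain zs where zs: "distinct zs" "set zs = (UNIV :: 'a set)"
    using finite_distinct_list[of "UNIV :: 'a set"] by auto
  define xs where "xs = sort_key v zs"
  have "image_mset v (mset_set UNIV) = mset (map v xs)"
    using zs by (simp add: xs_def flip: mset_set_set)
  then have "sorted_list_of_multiset (image_mset v (mset_set UNIV)) = map v xs"
    unfolding xs_def by (simp only: sorted_list_of_multiset_mset sorted_sort_id[OF sorted_sort_key])
  then have "desc_list v = map v (rev xs)" by (simp add: desc_list_def rev_map)
  moreover have "sorted_wrt (\<ge>) (map v (rev xs))"
    using sorted_sort_key[of v zs] by (simp add: xs_def sorted_wrt_rev flip: rev_map)
  moreover have "distinct (rev xs)" "set (rev xs) = UNIV" using zs by (simp_all add: xs_def)
  ultimately show ?thesis using that by blast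
qed

lemma top_sum_eq_sum_prefix:
  assumes "distinct ys" "desc_list v = map v ys"
  shows "top_sum v k = sum v (set (take k ys))"
  using assms by (simp add: top_sum_def take_map sum_list_distinct_conv_sum_set)

lemma top_sum_attained:
  fixes v :: "'a::finite \<Rightarrow> real"
  assumes "k \<le> CARD('a)"
  shows "\<exists>K. card K = k \<and> sum v K = top_sum v k"
proof -
  obtain ys where ys: "distinct ys" "set ys = (UNIV :: 'a set)" "desc_list v = map v ys"
    by (rule desc_list_enumeration)
  have "length ys = CARD('a)" using ys distinct_card by fastforce
  then have "card (set (take k ys)) = k" using ys assms by (simp add: distinct_card)
  with top_sum_eq_sum_prefix[OF ys(1,3)] show ?thesis by metis
qed

lemma sum_le_top_sum:
  fixes v :: "'a::finite \<Rightarrow> real"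
  shows "sum v K \<le> top_sum v (card K)"
proof -
  obtain ys where ys: "distinct ys" "set ys = (UNIV :: 'a set)"
      "sorted_wrt (\<ge>) (map v ys)" "desc_list v = map v ys"
    by (rule desc_list_enumeration)
  define P where "P = set (take (card K) ys)"
  have len: "length ys = CARD('a)" using ys distinct_card by fastforce
  have "card P = card K" using ys len card_mono[of UNIV K] by (simp add: P_def distinct_card)
  then have "card (K - P) = card (P - K)"
    by (metis card_Diff_subset_Int finite Int_commute)
  from finite_same_card_bij[OF finite finite this]
  obtain h where h: "bij_betw h (K - P) (P - K)" by blast
  have before: "v x \<le> v y" if "y \<in> P" "x \<notin> P" for x y
  proof -
    obtain i where i: "i < card K" "i < length ys" "y = ys ! i"
      using \<open>y \<in> P\<close> by (auto simp: P_def in_set_conv_nth)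
    obtain j where j: "j < length ys" "x = ys ! j"
      using ys(2) by (metis UNIV_I in_set_conv_nth)
    have "\<not> j < card K"
    proof
      assume "j < card K"
      then have "x = take (card K) ys ! j" "j < length (take (card K) ys)" using j by simp_all
      then have "x \<in> P" unfolding P_def by (metis nth_mem)
      with \<open>x \<notin> P\<close> show False by simp
    qed
    then have "i < j" using i by simp
    then show ?thesis using sorted_wrt_nth_less[OF ys(3), of i j] i j by simp
  qed
  have "sum v (K - P) \<le> sum (v \<circ> h) (K - P)"
    using h before by (intro sum_mono) (auto simp: bij_betw_def)
  also have "\<dots> = sum v (P - K)" using sum.reindex_bij_betw[OF h] by simp
  finally have "sum v K \<le> sum v P"
    using sum.Int_Diff[of K v P] sum.Int_Diff[of P v K] by (simp add: Int_commute)
  then show ?thesis using top_sum_eq_sum_prefix[OF ys(1,4)] by (simp add: P_def)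
qed

lemma top_sum_mono:
  fixes v v' :: "'a::finite \<Rightarrow> real"
  assumes "\<And>j. v j \<le> v' j" "k \<le> CARD('a)"
  shows "top_sum v k \<le> top_sum v' k"
proof -
  obtain K where K: "card K = k" "sum v K = top_sum v k"
    using top_sum_attained[OF assms(2)] by blast
  have "sum v K \<le> sum v' K" using assms(1) by (rule sum_mono)
  also have "\<dots> \<le> top_sum v' k" using sum_le_top_sum[of v' K] K(1) by simp
  finally show ?thesis using K(2) by simp
qed

lemma top_sum_combination_le:
  fixes f g :: "'a::finite \<Rightarrow> real"
  assumes "0 \<le> s" "0 \<le> t" "k \<le> CARD('a)"
  shows "top_sum (\<lambda>j. s * f j + t * g j) k \<le> s * top_sum f k + t * top_sum g k"
proof -
  obtain K where K: "card K = k" "(\<Sum>j\<in>K. s * f j + t * g j) = top_sum (\<lambda>j. s * f j + t * g j) k"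
    using top_sum_attained[OF assms(3)] by blast
  have "(\<Sum>j\<in>K. s * f j + t * g j) = s * sum f K + t * sum g K"
    by (simp add: sum.distrib sum_distrib_left)
  also have "\<dots> \<le> s * top_sum f k + t * top_sum g k"
    using sum_le_top_sum[of f K] sum_le_top_sum[of g K] K(1) assms(1,2)
    by (intro add_mono mult_left_mono) auto
  finally show ?thesis using K(2) by simp
qed

lemma top_sum_ge_extension:
  fixes v :: "'a::finite \<Rightarrow> real"
  assumes nonneg: "\<And>j. 0 \<le> v j" and lower: "\<And>j. v j \<noteq> 0 \<Longrightarrow> \<nu> \<le> v j"
    and A: "A \<subseteq> {j. v j \<noteq> 0}" "card A \<le> k" and k: "k \<le> CARD('a)"
  shows "sum v A + \<nu> * (real (min k (card {j. v j \<noteq> 0})) - real (card A)) \<le> top_sum v k"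
proof -
  define S where "S = {j. v j \<noteq> 0}"
  have "card A \<le> card S" using A by (simp add: S_def card_mono)
  moreover have "card (S - A) = card S - card A" using A by (simp add: S_def card_Diff_subset)
  ultimately obtain B where B: "B \<subseteq> S - A" "card B = min k (card S) - card A"
    using obtain_subset_with_card_n[of "min k (card S) - card A" "S - A"] by force
  have AB: "card (A \<union> B) = min k (card S)"
    using B A \<open>card A \<le> card S\<close> by (subst card_Un_disjoint) auto
  have "card (UNIV - (A \<union> B)) = CARD('a) - card (A \<union> B)" by (simp add: card_Diff_subset)
  then obtain C where C: "C \<subseteq> UNIV - (A \<union> B)" "card C = k - card (A \<union> B)"
    using k obtain_subset_with_card_n[of "k - card (A \<union> B)" "UNIV - (A \<union> B)"] by force
  have "sum v A + \<nu> * (real (min k (card S)) - real (card A)) = sum v A + (\<Sum>j\<in>B. \<nu>)"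
    using B A \<open>card A \<le> card S\<close> by (simp add: of_nat_diff)
  also have "\<dots> \<le> sum v A + sum v B + sum v C"
  proof -
    have "(\<Sum>j\<in>B. \<nu>) \<le> sum v B" using B lower by (intro sum_mono) (auto simp: S_def)
    moreover have "0 \<le> sum v C" using nonneg by (rule sum_nonneg)
    ultimately show ?thesis by linarith
  qed
  also have "\<dots> = sum v (A \<union> B \<union> C)"
    using B C by (subst sum.union_disjoint, auto)+
  also have "\<dots> \<le> top_sum v k"
  proof -
    have "card (A \<union> B \<union> C) = k" using C AB by (subst card_Un_disjoint) auto
    then show ?thesis using sum_le_top_sum[of v "A \<union> B \<union> C"] by simp
  qed
  finally show ?thesis unfolding S_def .
qed

lemma length_desc_list: "length (desc_list (v :: 'a::finite \<Rightarrow> real)) = CARD('a)"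
proof -
  obtain ys where "distinct ys" "set ys = (UNIV :: 'a set)" "desc_list v = map v ys"
    by (rule desc_list_enumeration)
  then show ?thesis by (metis distinct_card length_map)
qed

abbreviation top_abs_sum :: "real^'n \<Rightarrow> nat \<Rightarrow> real" where
  "top_abs_sum w k \<equiv> top_sum (\<lambda>j. \<bar>w $ j\<bar>) k"

lemma sum_ord_abs_eq_top_abs_sum:
  fixes w :: "real^'n"
  assumes "k \<le> CARD('n)"
  shows "(\<Sum>i=1..k. ord_abs w i) = top_abs_sum w k"
  using assms
proof (induction k)
  case 0
  then show ?case by (simp add: top_sum_def)
next
  case (Suc k)
  have "ord_abs w (Suc k) = desc_list (\<lambda>j. \<bar>w $ j\<bar>) ! k"
    by (simp add: ord_abs_def desc_list_def)
  then show ?case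
    using Suc length_desc_list[of "\<lambda>j. \<bar>w $ j\<bar>"] by (simp add: top_sum_def take_Suc_conv_app_nth)
qed

lemma sum_greaterThanAtMost_eq_diff:
  fixes f :: "nat \<Rightarrow> 'a::ab_group_add"
  assumes "a \<le> b"
  shows "(\<Sum>i\<in>{a<..b}. f i) = (\<Sum>i=1..b. f i) - (\<Sum>i=1..a. f i)"
  using assms
proof (induction b rule: dec_induct)
  case (step m)
  then show ?case by (simp add: atLeastSucAtMost_greaterThanAtMost[symmetric] sum.cl_ivl_Suc)
qed simp

lemma sum_ord_abs_window:
  fixes w :: "real^'n"
  assumes "a \<le> b" "b \<le> CARD('n)"
  shows "(\<Sum>i\<in>{a<..b}. ord_abs w i) = top_abs_sum w b - top_abs_sum w a"
  using assms sum_ord_abs_eq_top_abs_sum[of a w] sum_ord_abs_eq_top_abs_sum[of b w]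
  by (simp add: sum_greaterThanAtMost_eq_diff)

lemma card_add_card_Diff_le: "card S + card (K - S) \<le> CARD('a)"
  for S K :: "'a::finite set"
proof -
  have "card S + card (K - S) = card (S \<union> (K - S))" by (rule card_Un_disjoint[symmetric]) auto
  then show ?thesis by (metis card_mono finite subset_UNIV)
qed

lemma exchange_card_le:
  fixes K M Q S :: "'a::finite set"
  assumes MQ: "M \<inter> S = {}" "Q \<subseteq> S"
  shows "card (K \<inter> M) + 2 * card (K \<inter> S) + min (card K - (card S - card Q)) (card Q)
       \<le> min (card K - card S) (card M) + 2 * min (card K) (card S) + card (K \<inter> Q)"
proof -
  have "card (K \<inter> S) \<le> card ((K \<inter> Q) \<union> (S - Q))" by (intro card_mono) auto
  also have "\<dots> \<le> card (K \<inter> Q) + card (S - Q)" by (rule card_Un_le)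
  finally have "card (K \<inter> S) \<le> card (K \<inter> Q) + (card S - card Q)"
    using MQ by (simp add: card_Diff_subset)
  moreover have "card (K \<inter> S) + card (K \<inter> M) \<le> card K"
  proof -
    have "card (K \<inter> S) + card (K \<inter> M) = card ((K \<inter> S) \<union> (K \<inter> M))"
      using MQ by (subst card_Un_disjoint) auto
    then show ?thesis by (metis card_mono finite Int_Un_distrib Int_lower1)
  qed
  moreover have "card (K \<inter> Q) \<le> card (K \<inter> S)" "card (K \<inter> Q) \<le> card Q" "card (K \<inter> M) \<le> card M"
    "card Q \<le> card S"
    using MQ by (auto intro: card_mono)
  ultimately show ?thesis by (auto simp: min_def)
qed

(* The margin 2 \<mu> keeps the entries shrunk on Q at least \<mu>, so no entry placed on M
   overtakes an entry on S. *)
lemma top_abs_sum_exchange_bound: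
  fixes bhat c :: "real^'n" and M Q :: "'n set"
  defines "S \<equiv> {j. bhat $ j \<noteq> 0}"
  assumes \<mu>: "0 < \<mu>" "\<And>j. bhat $ j \<noteq> 0 \<Longrightarrow> 2 * \<mu> \<le> \<bar>bhat $ j\<bar>"
    and MQ: "M \<inter> S = {}" "Q \<subseteq> S"
    and c: "\<And>j. \<bar>c $ j\<bar> \<le> \<bar>bhat $ j\<bar> + (if j \<in> M then \<mu> else 0) - (if j \<in> Q then \<mu> else 0)"
    and k: "k \<le> CARD('n)"
  shows "top_abs_sum c k \<le> top_abs_sum bhat k
           + \<mu> * (real (min (k - card S) (card M)) - real (min (k - (card S - card Q)) (card Q)))"
proof -
  obtain K where K: "card K = k" "(\<Sum>j\<in>K. \<bar>c $ j\<bar>) = top_abs_sum c k"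
    using top_sum_attained[OF k] by blast
  have "(\<Sum>j\<in>K. \<bar>c $ j\<bar>)
      \<le> (\<Sum>j\<in>K. \<bar>bhat $ j\<bar> + (if j \<in> M then \<mu> else 0) - (if j \<in> Q then \<mu> else 0))"
    using c by (rule sum_mono)
  also have "\<dots> = (\<Sum>j\<in>K. \<bar>bhat $ j\<bar>) + \<mu> * card (K \<inter> M) - \<mu> * card (K \<inter> Q)"
    by (simp add: sum.distrib sum_subtractf sum.If_cases Int_def)
  also have "(\<Sum>j\<in>K. \<bar>bhat $ j\<bar>) = (\<Sum>j\<in>K \<inter> S. \<bar>bhat $ j\<bar>)"
    by (rule sum.mono_neutral_right) (auto simp: S_def)
  finally have upper: "top_abs_sum c k
      \<le> (\<Sum>j\<in>K \<inter> S. \<bar>bhat $ j\<bar>) + \<mu> * card (K \<inter> M) - \<mu> * card (K \<inter> Q)"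
    using K by simp
  have "card (K \<inter> S) \<le> k" using K card_mono[of K "K \<inter> S"] by simp
  then have lower: "(\<Sum>j\<in>K \<inter> S. \<bar>bhat $ j\<bar>) + 2 * \<mu> * (real (min k (card S)) - real (card (K \<inter> S)))
      \<le> top_abs_sum bhat k"
    using top_sum_ge_extension[of "\<lambda>j. \<bar>bhat $ j\<bar>" "2 * \<mu>" "K \<inter> S" k] \<mu> k by (auto simp: S_def)
  define r q where "r = card S" and "q = card Q"
  have "card (K \<inter> M) + 2 * card (K \<inter> S) + min (k - (r - q)) q
      \<le> min (k - r) (card M) + 2 * min k r + card (K \<inter> Q)"
    using exchange_card_le[OF MQ, of K] K(1) by (simp add: r_def q_def)
  then have "real (card (K \<inter> M) + 2 * card (K \<inter> S) + min (k - (r - q)) q)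
      \<le> real (min (k - r) (card M) + 2 * min k r + card (K \<inter> Q))"
    by (rule of_nat_mono)
  then have "\<mu> * (card (K \<inter> M) + 2 * card (K \<inter> S) + min (k - (r - q)) q)
      \<le> \<mu> * (min (k - r) (card M) + 2 * min k r + card (K \<inter> Q))"
    using \<mu>(1) by (intro mult_left_mono) simp_all
  then show ?thesis using upper lower by (simp add: r_def q_def algebra_simps)
qed

lemma obtain_support_margin:
  fixes x :: "real^'n"
  obtains \<mu> where "0 < \<mu>" "\<And>j. x $ j \<noteq> 0 \<Longrightarrow> 2 * \<mu> \<le> \<bar>x $ j\<bar>"
proof
  define \<mu> where "\<mu> = Min (insert 1 ((\<lambda>j. \<bar>x $ j\<bar>) ` {j. x $ j \<noteq> 0})) / 2"
  show "0 < \<mu>" by (auto simp: \<mu>_def)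
  show "2 * \<mu> \<le> \<bar>x $ j\<bar>" if "x $ j \<noteq> 0" for j
    using that by (auto simp: \<mu>_def intro: Min_le)
qed

section \<open>Sums of decreasing weights\<close>

lemma summation_by_parts:
  fixes lam x :: "nat \<Rightarrow> real"
  assumes "x 0 = 0"
  shows "(\<Sum>i=1..n. lam i * (x i - x (i - 1)))
       = (\<Sum>i=1..<n. (lam i - lam (Suc i)) * x i) + lam n * x n"
proof (induction n)
  case (Suc n)
  then show ?case using assms by (cases n) (simp_all add: algebra_simps)
qed (simp add: assms)

lemma sum_window_increments:
  fixes lam :: "nat \<Rightarrow> real"
  assumes "c + m \<le> n"
  shows "(\<Sum>i=1..n. lam i * (real (min (i - c) m) - real (min (i - 1 - c) m)))
       = (\<Sum>i\<in>{c<..c+m}. lam i)"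
proof -
  have "(\<Sum>i=1..n. lam i * (real (min (i - c) m) - real (min (i - 1 - c) m)))
      = (\<Sum>i=1..n. if i \<in> {c<..c+m} then lam i else 0)"
    by (rule sum.cong) (auto simp: min_def)
  also have "\<dots> = sum lam ({1..n} \<inter> {c<..c+m})"
    by (simp add: sum.inter_restrict)
  also have "{1..n} \<inter> {c<..c+m} = {c<..c+m}"
    using assms by auto
  finally show ?thesis .
qed

context
  fixes lam :: "nat \<Rightarrow> real" and n :: nat
  assumes lam_mono: "\<And>i. 1 \<le> i \<Longrightarrow> i < n \<Longrightarrow> lam i \<ge> lam (i + 1)"
begin

lemma lam_antitone:
  assumes "1 \<le> i" "i \<le> i'" "i' \<le> n"
  shows "lam i' \<le> lam i"
  using assms(2,3)
proof (induction i' rule: dec_induct)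
  case (step m)
  then show ?case using lam_mono[of m] assms(1) by simp
qed simp

lemma window_sum_slide:
  assumes "a \<le> b" "b + q \<le> n"
  shows "(\<Sum>i\<in>{b<..b+q}. lam i) \<le> (\<Sum>i\<in>{a<..a+q}. lam i)"
  using assms(2)
proof (induction q)
  case (Suc q)
  have "lam (Suc (b + q)) \<le> lam (Suc (a + q))"
    using lam_antitone[of "Suc (a + q)" "Suc (b + q)"] Suc.prems assms(1) by simp
  then show ?case
    using Suc by (simp add: atLeastSucAtMost_greaterThanAtMost[symmetric] sum.cl_ivl_Suc)
qed simp

lemma sum_by_parts_mono:
  fixes X Y :: "nat \<Rightarrow> real"
  assumes "lam n \<ge> 0" "X 0 = 0" "Y 0 = 0" "\<And>k. 1 \<le> k \<Longrightarrow> k \<le> n \<Longrightarrow> X k \<le> Y k"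
  shows "(\<Sum>i=1..n. lam i * (X i - X (i - 1))) \<le> (\<Sum>i=1..n. lam i * (Y i - Y (i - 1)))"
proof -
  have "(\<Sum>i=1..<n. (lam i - lam (Suc i)) * X i) \<le> (\<Sum>i=1..<n. (lam i - lam (Suc i)) * Y i)"
    using lam_mono assms(4) by (intro sum_mono mult_left_mono) auto
  moreover have "lam n * X n \<le> lam n * Y n"
    using assms by (cases n) (auto intro: mult_left_mono)
  ultimately show ?thesis
    unfolding summation_by_parts[of X, OF assms(2)] summation_by_parts[of Y, OF assms(3)] by simp
qed

end

(* The weights taken by K - S when it enters just below the |S| largest entries, minus those
   given up by S - K at the bottom of them. *)
definition exchange_weight :: "(nat \<Rightarrow> real) \<Rightarrow> 'a set \<Rightarrow> 'a set \<Rightarrow> real" where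
  "exchange_weight lam S K =
     (\<Sum>i\<in>{card S<..card S + card (K - S)}. lam i) - (\<Sum>i\<in>{card S - card (S - K)<..card S}. lam i)"

section \<open>The SLOPE penalty and its subgradients\<close>

lemma slope_pen_eq_sum_increments:
  "slope_pen lam (b :: real^'n) = (\<Sum>i=1..CARD('n). lam i * (top_abs_sum b i - top_abs_sum b (i - 1)))"
proof -
  have "ord_abs b i = top_abs_sum b i - top_abs_sum b (i - 1)" if "i \<in> {1..CARD('n)}" for i
    using that sum_ord_abs_eq_top_abs_sum[of i b] sum_ord_abs_eq_top_abs_sum[of "i - 1" b]
    by (cases i) simp_all
  then show ?thesis unfolding slope_pen_def by (intro sum.cong) simp_all
qed

lemma minimizer_variational_inequality:
  fixes l g :: "'a::real_normed_vector \<Rightarrow> real"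
  assumes deriv: "(l has_derivative D) (at x)" and "convex_on UNIV g"
    and min: "\<And>z. l x + g x \<le> l z + g z"
  shows "- D (y - x) \<le> g y - g x"
proof (rule ccontr)
  define \<phi> where "\<phi> t = l (x + t *\<^sub>R (y - x)) + ((1 - t) * g x + t * g y)" for t
  assume "\<not> ?thesis"
  then have neg: "D (y - x) + (g y - g x) < 0" by simp
  have "((\<lambda>t. x + t *\<^sub>R (y - x)) has_derivative (\<lambda>t. t *\<^sub>R (y - x))) (at 0)"
    by (auto intro!: derivative_eq_intros)
  from has_derivative_compose[OF this, of l D] deriv
  have "((\<lambda>t. l (x + t *\<^sub>R (y - x))) has_derivative (\<lambda>t. t * D (y - x))) (at 0)"
    using linear_cmul[OF has_derivative_linear[OF deriv]] by simp
  then have "(\<phi> has_real_derivative D (y - x) + (g y - g x)) (at 0)"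
    unfolding \<phi>_def has_field_derivative_def
    by (auto intro!: derivative_eq_intros simp: algebra_simps)
  from DERIV_neg_dec_right[OF this neg] obtain e where
    e: "e > 0" "\<And>h. h > 0 \<Longrightarrow> h < e \<Longrightarrow> \<phi> (0 + h) < \<phi> 0" by blast
  define t where "t = min (e / 2) 1"
  have t: "0 \<le> t" "t \<le> 1" "\<phi> t < \<phi> 0" using e by (auto simp: t_def)
  have "x + t *\<^sub>R (y - x) = (1 - t) *\<^sub>R x + t *\<^sub>R y" by (simp add: algebra_simps)
  then have "g (x + t *\<^sub>R (y - x)) \<le> (1 - t) * g x + t * g y"
    using convex_onD[OF assms(2)] t by simp
  then have "\<phi> 0 \<le> \<phi> t" using min[of "x + t *\<^sub>R (y - x)"] by (simp add: \<phi>_def)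
  with t show False by simp
qed

context
  fixes lam :: "nat \<Rightarrow> real"
  assumes lam_mono: "\<And>i. 1 \<le> i \<Longrightarrow> i < CARD('n::finite) \<Longrightarrow> lam i \<ge> lam (i + 1)"
    and lam_nonneg: "lam (CARD('n)) \<ge> 0"
begin

lemma slope_pen_le_by_top_abs_sum:
  fixes b c :: "real^'n" and y :: "nat \<Rightarrow> real"
  assumes "y 0 = 0" "\<And>k. 1 \<le> k \<Longrightarrow> k \<le> CARD('n) \<Longrightarrow> top_abs_sum b k \<le> top_abs_sum c k + y k"
  shows "slope_pen lam b \<le> slope_pen lam c + (\<Sum>i=1..CARD('n). lam i * (y i - y (i - 1)))"
proof -
  have "slope_pen lam b
      \<le> (\<Sum>i=1..CARD('n). lam i * ((top_abs_sum c i + y i) - (top_abs_sum c (i - 1) + y (i - 1))))"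
    unfolding slope_pen_eq_sum_increments
    by (rule sum_by_parts_mono[OF lam_mono lam_nonneg]) (use assms in \<open>auto simp: top_sum_def\<close>)
  also have "\<dots> = slope_pen lam c + (\<Sum>i=1..CARD('n). lam i * (y i - y (i - 1)))"
    unfolding slope_pen_eq_sum_increments sum.distrib[symmetric]
    by (rule sum.cong) (auto simp: algebra_simps)
  finally show ?thesis .
qed

lemma slope_pen_mono_abs:
  fixes b c :: "real^'n"
  assumes "\<And>j. \<bar>b $ j\<bar> \<le> \<bar>c $ j\<bar>"
  shows "slope_pen lam b \<le> slope_pen lam c"
  using slope_pen_le_by_top_abs_sum[of "\<lambda>_. 0" b c] assms by (simp add: top_sum_mono)

lemma convex_slope_pen: "convex_on UNIV (slope_pen lam :: real^'n \<Rightarrow> real)"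
proof (rule convex_onI)
  fix t :: real and x y :: "real^'n"
  assume t: "0 < t" "t < 1"
  have "top_abs_sum ((1 - t) *\<^sub>R x + t *\<^sub>R y) k
        \<le> (1 - t) * top_abs_sum x k + t * top_abs_sum y k" if "k \<le> CARD('n)" for k
  proof -
    have "top_abs_sum ((1 - t) *\<^sub>R x + t *\<^sub>R y) k
        \<le> top_sum (\<lambda>j. (1 - t) * \<bar>x $ j\<bar> + t * \<bar>y $ j\<bar>) k"
      using t that abs_triangle_ineq[of "(1 - t) * x $ j" "t * y $ j" for j]
      by (intro top_sum_mono) (simp_all add: abs_mult)
    also have "\<dots> \<le> (1 - t) * top_abs_sum x k + t * top_abs_sum y k"
      using t that by (intro top_sum_combination_le) simp_all
    finally show ?thesis .
  qed
  then have "slope_pen lam ((1 - t) *\<^sub>R x + t *\<^sub>R y) \<le> (\<Sum>i=1..CARD('n). lam i *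
      (((1 - t) * top_abs_sum x i + t * top_abs_sum y i) - ((1 - t) * top_abs_sum x (i - 1) + t * top_abs_sum y (i - 1))))"
    unfolding slope_pen_eq_sum_increments
    by (intro sum_by_parts_mono[OF lam_mono lam_nonneg]) (simp_all add: top_sum_def)
  also have "\<dots> = (1 - t) * slope_pen lam x + t * slope_pen lam y"
    unfolding slope_pen_eq_sum_increments sum_distrib_left sum.distrib[symmetric]
    by (rule sum.cong) (auto simp: algebra_simps)
  finally show "slope_pen lam ((1 - t) *\<^sub>R x + t *\<^sub>R y) \<le> (1 - t) * slope_pen lam x + t * slope_pen lam y" .
qed simp

lemma slope_pen_exchange_bound:
  fixes bhat c :: "real^'n" and K :: "'n set"
  defines "S \<equiv> {j. bhat $ j \<noteq> 0}"
  assumes \<mu>: "0 < \<mu>" "\<And>j. bhat $ j \<noteq> 0 \<Longrightarrow> 2 * \<mu> \<le> \<bar>bhat $ j\<bar>"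
    and c: "\<And>j. \<bar>c $ j\<bar>
              \<le> \<bar>bhat $ j\<bar> + (if j \<in> K - S then \<mu> else 0) - (if j \<in> S - K then \<mu> else 0)"
  shows "slope_pen lam c \<le> slope_pen lam bhat + \<mu> * exchange_weight lam S K"
proof -
  define r q m where "r = card S" and "q = card (S - K)" and "m = card (K - S)"
  define y where "y k = \<mu> * (real (min (k - r) m) - real (min (k - (r - q)) q))" for k
  have MQ: "(K - S) \<inter> S = {}" "S - K \<subseteq> S" by auto
  have "slope_pen lam c \<le> slope_pen lam bhat + (\<Sum>i=1..CARD('n). lam i * (y i - y (i - 1)))"
    using top_abs_sum_exchange_bound[OF \<mu> MQ[unfolded S_def] c[unfolded S_def]]
    by (intro slope_pen_le_by_top_abs_sum) (simp_all add: y_def r_def q_def m_def S_def)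
  also have "(\<Sum>i=1..CARD('n). lam i * (y i - y (i - 1)))
      = \<mu> * ((\<Sum>i=1..CARD('n). lam i * (real (min (i - r) m) - real (min (i - 1 - r) m)))
            - (\<Sum>i=1..CARD('n). lam i * (real (min (i - (r - q)) q) - real (min (i - 1 - (r - q)) q))))"
    unfolding y_def sum_distrib_left sum_subtractf[symmetric] by (rule sum.cong) (simp_all add: algebra_simps)
  also have "\<dots> = \<mu> * ((\<Sum>i\<in>{r<..r + m}. lam i) - (\<Sum>i\<in>{r - q<..r}. lam i))"
  proof -
    have rm: "r + m \<le> CARD('n)" by (simp add: r_def m_def card_add_card_Diff_le)
    have qr: "r - q + q = r" by (simp add: q_def r_def card_mono)
    have "(\<Sum>i=1..CARD('n). lam i * (real (min (i - (r - q)) q) - real (min (i - 1 - (r - q)) q)))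
        = (\<Sum>i\<in>{r - q<..r - q + q}. lam i)"
      using rm qr by (intro sum_window_increments) simp
    with sum_window_increments[OF rm] show ?thesis unfolding qr by (simp only:)
  qed
  finally show ?thesis by (simp add: exchange_weight_def r_def q_def m_def)
qed

context
  fixes U bhat :: "real^'n"
  assumes subgradient: "\<And>b. U \<bullet> (b - bhat) \<le> slope_pen lam b - slope_pen lam bhat"
begin

lemma subgradient_sign: "0 \<le> U $ j * bhat $ j"
proof -
  define b :: "real^'n" where "b = (\<chi> i. if i = j then 0 else bhat $ i)"
  have "b - bhat = (\<chi> i. if i = j then - bhat $ j else 0)" by (simp add: b_def vec_eq_iff)
  then have "U \<bullet> (b - bhat) = - (U $ j * bhat $ j)"
    by (simp add: inner_vec_def if_distrib cong: if_cong)
  moreover have "slope_pen lam b \<le> slope_pen lam bhat"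
    by (rule slope_pen_mono_abs) (auto simp: b_def)
  ultimately show ?thesis using subgradient[of b] by simp
qed

lemma abs_shifted_subgradient:
  assumes "0 \<le> a"
  shows "\<bar>(U + a *\<^sub>R bhat) $ j\<bar> = \<bar>U $ j\<bar> + a * \<bar>bhat $ j\<bar>"
proof -
  have "0 \<le> U $ j \<and> 0 \<le> bhat $ j \<or> U $ j \<le> 0 \<and> bhat $ j \<le> 0"
    using subgradient_sign[of j] by (simp add: zero_le_mult_iff)
  then show ?thesis
  proof
    assume "0 \<le> U $ j \<and> 0 \<le> bhat $ j"
    then show ?thesis using assms by (simp add: abs_mult abs_of_nonneg)
  next
    assume "U $ j \<le> 0 \<and> bhat $ j \<le> 0"
    moreover have "a * bhat $ j \<le> 0" using calculation assms by (simp add: mult_nonneg_nonpos)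
    ultimately show ?thesis using assms by (simp add: abs_mult abs_of_nonpos)
  qed
qed

lemma subgradient_exchange:
  defines "S \<equiv> {j. bhat $ j \<noteq> 0}"
  shows "(\<Sum>j\<in>K - S. \<bar>U $ j\<bar>) - (\<Sum>j\<in>S - K. \<bar>U $ j\<bar>) \<le> exchange_weight lam S K"
proof -
  obtain \<mu> where \<mu>: "0 < \<mu>" "\<And>j. bhat $ j \<noteq> 0 \<Longrightarrow> 2 * \<mu> \<le> \<bar>bhat $ j\<bar>"
    using obtain_support_margin[of bhat] by blast
  define z :: "real^'n" where
    "z = (\<chi> j. if j \<in> K - S then sgn (U $ j) else if j \<in> S - K then - sgn (bhat $ j) else 0)"
  have "U \<bullet> z
      = (\<Sum>j\<in>UNIV. (if j \<in> K - S then \<bar>U $ j\<bar> else 0) - (if j \<in> S - K then \<bar>U $ j\<bar> else 0))"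
  proof -
    have "U $ j * sgn (bhat $ j) = \<bar>U $ j\<bar>" if "j \<in> S" for j
      using subgradient_sign[of j] that by (auto simp: S_def sgn_if zero_le_mult_iff)
    then show ?thesis unfolding inner_vec_def z_def by (intro sum.cong) (auto simp: abs_sgn)
  qed
  also have "\<dots> = (\<Sum>j\<in>K - S. \<bar>U $ j\<bar>) - (\<Sum>j\<in>S - K. \<bar>U $ j\<bar>)"
    by (simp add: sum_subtractf sum.If_cases set_diff_eq)
  finally have Uz: "U \<bullet> z = (\<Sum>j\<in>K - S. \<bar>U $ j\<bar>) - (\<Sum>j\<in>S - K. \<bar>U $ j\<bar>)" .
  have c_bound: "\<bar>(bhat + \<mu> *\<^sub>R z) $ j\<bar>
      \<le> \<bar>bhat $ j\<bar> + (if j \<in> K - S then \<mu> else 0) - (if j \<in> S - K then \<mu> else 0)" for j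
  proof (cases "j \<in> S - K")
    case True
    then have "\<mu> < \<bar>bhat $ j\<bar>" using \<mu> by (fastforce simp: S_def)
    then show ?thesis using True \<mu>(1) by (auto simp: z_def sgn_if)
  next
    case False
    then show ?thesis using \<mu>(1) by (auto simp: z_def S_def abs_mult abs_sgn_eq)
  qed
  from slope_pen_exchange_bound[OF \<mu> c_bound[unfolded S_def]]
  have "slope_pen lam (bhat + \<mu> *\<^sub>R z) \<le> slope_pen lam bhat + \<mu> * exchange_weight lam S K"
    unfolding S_def .
  moreover have "U \<bullet> ((bhat + \<mu> *\<^sub>R z) - bhat) = \<mu> * (U \<bullet> z)" by simp
  ultimately have "\<mu> * ((\<Sum>j\<in>K - S. \<bar>U $ j\<bar>) - (\<Sum>j\<in>S - K. \<bar>U $ j\<bar>))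
      \<le> \<mu> * exchange_weight lam S K"
    using subgradient[of "bhat + \<mu> *\<^sub>R z"] Uz by simp
  then show ?thesis using \<mu>(1) by simp
qed

lemma shifted_subgradient_exchange:
  fixes a :: real
  defines "S \<equiv> {j. bhat $ j \<noteq> 0}" and "w \<equiv> U + a *\<^sub>R bhat"
  assumes "0 \<le> a"
  shows "(\<Sum>j\<in>K. \<bar>w $ j\<bar>) + a * (\<Sum>j\<in>S - K. \<bar>bhat $ j\<bar>)
       \<le> (\<Sum>j\<in>S. \<bar>w $ j\<bar>) + exchange_weight lam S K"
proof -
  have w: "\<bar>w $ j\<bar> = \<bar>U $ j\<bar> + a * \<bar>bhat $ j\<bar>" for j
    unfolding w_def using abs_shifted_subgradient[OF assms(3)] .
  have "(\<Sum>j\<in>K. \<bar>w $ j\<bar>) = (\<Sum>j\<in>K \<inter> S. \<bar>w $ j\<bar>) + (\<Sum>j\<in>K - S. \<bar>w $ j\<bar>)"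
    by (rule sum.Int_Diff) simp
  also have "(\<Sum>j\<in>K - S. \<bar>w $ j\<bar>) = (\<Sum>j\<in>K - S. \<bar>U $ j\<bar>)"
    by (intro sum.cong) (auto simp: w S_def)
  moreover have "(\<Sum>j\<in>S. \<bar>w $ j\<bar>)
      = (\<Sum>j\<in>K \<inter> S. \<bar>w $ j\<bar>) + (\<Sum>j\<in>S - K. \<bar>w $ j\<bar>)"
    using sum.Int_Diff[of S _ K] by (simp add: Int_commute)
  moreover have "(\<Sum>j\<in>S - K. \<bar>w $ j\<bar>)
      = (\<Sum>j\<in>S - K. \<bar>U $ j\<bar>) + a * (\<Sum>j\<in>S - K. \<bar>bhat $ j\<bar>)"
    by (simp add: w sum.distrib sum_distrib_left)
  ultimately show ?thesis using subgradient_exchange[of K] unfolding S_def by linarith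
qed

lemma shifted_subgradient_exchange_le:
  fixes a :: real
  defines "S \<equiv> {j. bhat $ j \<noteq> 0}" and "w \<equiv> U + a *\<^sub>R bhat"
  assumes "0 \<le> a"
  shows "(\<Sum>j\<in>K. \<bar>w $ j\<bar>) \<le> (\<Sum>j\<in>S. \<bar>w $ j\<bar>) + exchange_weight lam S K"
proof -
  have "0 \<le> a * (\<Sum>j\<in>S - K. \<bar>bhat $ j\<bar>)" using assms(3) by (simp add: sum_nonneg)
  then show ?thesis using shifted_subgradient_exchange[OF assms(3), of K] unfolding S_def w_def by linarith
qed

lemma shifted_subgradient_exchange_less:
  fixes a :: real
  defines "S \<equiv> {j. bhat $ j \<noteq> 0}" and "w \<equiv> U + a *\<^sub>R bhat"
  assumes "0 < a" "\<not> S \<subseteq> K"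
  shows "(\<Sum>j\<in>K. \<bar>w $ j\<bar>) < (\<Sum>j\<in>S. \<bar>w $ j\<bar>) + exchange_weight lam S K"
proof -
  have "0 < a * (\<Sum>j\<in>S - K. \<bar>bhat $ j\<bar>)"
    using assms(3,4) by (intro mult_pos_pos sum_pos) (auto simp: S_def)
  then show ?thesis using shifted_subgradient_exchange[of a K] assms(3) unfolding S_def w_def by linarith
qed

end

end

section \<open>The sets H_r\<close>

lemma H_set_disjoint:
  fixes w :: "real^'n"
  assumes "w \<in> H_set lam r" "w \<in> H_set lam r'" "r \<in> {1..CARD('n)}" "r' \<in> {1..CARD('n)}"
  shows "r = r'"
proof -
  have False if "w \<in> H_set lam s" "w \<in> H_set lam s'" "s < s'" "s' \<le> CARD('n)" for s s'
  proof -
    have "(\<Sum>i=s+1..s'. ord_abs w i) \<le> (\<Sum>i=s+1..s'. lam i)" using that(1,3,4) by (auto simp: H_set_def)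
    moreover have "(\<Sum>i=s+1..s'. lam i) < (\<Sum>i=s+1..s'. ord_abs w i)" using that(2,3) by (auto simp: H_set_def)
    ultimately show False by simp
  qed
  then show ?thesis using assms by (metis atLeastAtMost_iff linorder_neqE_nat)
qed

lemma not_in_H_set_if_top_abs_sum_le:
  fixes w :: "real^'n"
  assumes "r \<in> {1..CARD('n)}" "top_abs_sum w r \<le> (\<Sum>i=1..r. lam i)"
  shows "w \<notin> H_set lam r"
proof
  assume "w \<in> H_set lam r"
  then have "(\<Sum>i=1..r. lam i) < (\<Sum>i=1..r. ord_abs w i)" using assms(1) by (auto simp: H_set_def)
  with assms sum_ord_abs_eq_top_abs_sum[of r w] show False by simp
qed

context
  fixes lam :: "nat \<Rightarrow> real"
  assumes lam_mono: "\<And>i. 1 \<le> i \<Longrightarrow> i < CARD('n::finite) \<Longrightarrow> lam i \<ge> lam (i + 1)"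
begin

lemma H_set_upper_if_exchange:
  fixes w :: "real^'n" and S :: "'n set"
  assumes exchange: "\<And>K. (\<Sum>j\<in>K. \<bar>w $ j\<bar>) \<le> (\<Sum>j\<in>S. \<bar>w $ j\<bar>) + exchange_weight lam S K"
    and j: "card S \<le> j" "j \<le> CARD('n)"
  shows "(\<Sum>i\<in>{card S<..j}. ord_abs w i) \<le> (\<Sum>i\<in>{card S<..j}. lam i)"
proof -
  define r where "r = card S"
  define L where "L k = (\<Sum>i=1..k. lam i)" for k
  obtain K where K: "card K = j" "(\<Sum>j\<in>K. \<bar>w $ j\<bar>) = top_abs_sum w j"
    using top_sum_attained[OF j(2)] by blast
  define m q where "m = card (K - S)" and "q = card (S - K)"
  have "j = card (K \<inter> S) + m" "r = card (K \<inter> S) + q"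
    using K(1) card_Int_Diff[of K S] card_Int_Diff[of S K] by (simp_all add: m_def q_def r_def Int_commute)
  then have jq: "r + m = j + q" "q \<le> r" by simp_all
  have "L (j + q) - L j \<le> L r - L (r - q)"
    using window_sum_slide[where lam = lam and n = "CARD('n)", OF lam_mono, of "r - q" j q] jq j card_add_card_Diff_le[of S K]
    by (simp add: L_def r_def m_def sum_greaterThanAtMost_eq_diff)
  moreover have "top_abs_sum w j \<le> top_abs_sum w r + (L (r + m) - L r) - (L r - L (r - q))"
    using exchange[of K] K sum_le_top_sum[of "\<lambda>j. \<bar>w $ j\<bar>" S] jq
    by (simp add: exchange_weight_def L_def r_def m_def q_def sum_greaterThanAtMost_eq_diff)
  moreover have "(\<Sum>i\<in>{r<..j}. lam i) = L j - L r"
    using j by (simp add: L_def r_def sum_greaterThanAtMost_eq_diff)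
  moreover have "L (r + m) = L (j + q)" using jq by simp
  ultimately show ?thesis
    using sum_ord_abs_window[OF j, of w] unfolding r_def by linarith
qed

lemma H_set_lower_if_exchange:
  fixes w :: "real^'n" and S :: "'n set"
  assumes exchange: "\<And>K. \<not> S \<subseteq> K \<Longrightarrow>
      (\<Sum>j\<in>K. \<bar>w $ j\<bar>) < (\<Sum>j\<in>S. \<bar>w $ j\<bar>) + exchange_weight lam S K"
    and j: "j < card S"
  shows "(\<Sum>i\<in>{j<..card S}. lam i) < (\<Sum>i\<in>{j<..card S}. ord_abs w i)"
proof -
  define r where "r = card S"
  define L where "L k = (\<Sum>i=1..k. lam i)" for k
  have rn: "r \<le> CARD('n)" by (simp add: r_def card_mono)
  obtain K where K: "card K = j" "(\<Sum>j\<in>K. \<bar>w $ j\<bar>) = top_abs_sum w j"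
    using top_sum_attained[of j "\<lambda>j. \<bar>w $ j\<bar>"] j rn r_def by fastforce
  have "\<not> S \<subseteq> K" using K(1) j card_mono[of K S] by auto
  define m q where "m = card (K - S)" and "q = card (S - K)"
  have "j = card (K \<inter> S) + m" "r = card (K \<inter> S) + q"
    using K(1) card_Int_Diff[of K S] card_Int_Diff[of S K] by (simp_all add: m_def q_def r_def Int_commute)
  then have jq: "r - q + m = j" "q \<le> r" by simp_all
  have "L (r + m) - L r \<le> L j - L (r - q)"
    using window_sum_slide[where lam = lam and n = "CARD('n)", OF lam_mono, of "r - q" r m] jq card_add_card_Diff_le[of S K]
    by (simp add: L_def r_def m_def sum_greaterThanAtMost_eq_diff)
  moreover have "top_abs_sum w j < top_abs_sum w r + (L (r + m) - L r) - (L r - L (r - q))"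
    using exchange[OF \<open>\<not> S \<subseteq> K\<close>] K sum_le_top_sum[of "\<lambda>j. \<bar>w $ j\<bar>" S] jq
    by (simp add: exchange_weight_def L_def r_def m_def q_def sum_greaterThanAtMost_eq_diff)
  moreover have "(\<Sum>i\<in>{j<..r}. lam i) = L r - L j"
    using j by (simp add: L_def r_def sum_greaterThanAtMost_eq_diff)
  ultimately show ?thesis
    using sum_ord_abs_window[of j r w] j jq rn unfolding r_def by linarith
qed

lemma card_eq_iff_in_H_set_if_exchange:
  fixes w :: "real^'n" and S :: "'n set"
  assumes exchange: "\<And>K. (\<Sum>j\<in>K. \<bar>w $ j\<bar>) \<le> (\<Sum>j\<in>S. \<bar>w $ j\<bar>) + exchange_weight lam S K"
    and strict: "\<And>K. \<not> S \<subseteq> K \<Longrightarrow>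
      (\<Sum>j\<in>K. \<bar>w $ j\<bar>) < (\<Sum>j\<in>S. \<bar>w $ j\<bar>) + exchange_weight lam S K"
    and r: "r \<in> {1..CARD('n)}"
  shows "card S = r \<longleftrightarrow> w \<in> H_set lam r"
proof (cases "S = {}")
  case True
  obtain K where K: "card K = r" "(\<Sum>j\<in>K. \<bar>w $ j\<bar>) = top_abs_sum w r"
    using top_sum_attained[of r "\<lambda>j. \<bar>w $ j\<bar>"] r by auto
  have "top_abs_sum w r \<le> (\<Sum>i=1..r. lam i)"
    using exchange[of K] K True by (simp add: exchange_weight_def atLeastSucAtMost_greaterThanAtMost[symmetric])
  then show ?thesis using not_in_H_set_if_top_abs_sum_le[OF r] True r by auto
next
  case False
  have "card S \<le> CARD('n)" by (simp add: card_mono)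
  moreover have "card S \<ge> 1" using False by (simp add: Suc_leI card_gt_0_iff)
  moreover have "w \<in> H_set lam (card S)"
    unfolding H_set_def
  proof (intro CollectI conjI ballI)
    fix j assume j: "j \<in> {1..card S}"
    then have "{j..card S} = {j - 1<..card S}" by auto
    then show "(\<Sum>i=j..card S. lam i) < (\<Sum>i=j..card S. ord_abs w i)"
      using H_set_lower_if_exchange[OF strict, of "j - 1"] j by auto
  next
    fix j assume "j \<in> {card S + 1..CARD('n)}"
    then show "(\<Sum>i=card S+1..j. lam i) \<ge> (\<Sum>i=card S+1..j. ord_abs w i)"
      using H_set_upper_if_exchange[OF exchange, of j]
      by (simp add: atLeastSucAtMost_greaterThanAtMost)
  qed
  ultimately show ?thesis using H_set_disjoint[of w lam "card S" r] r by auto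
qed

end

theorem theorem2:
  fixes l :: "real^'n \<Rightarrow> real"
    and gradl :: "real^'n \<Rightarrow> real^'n"
    and lam :: "nat \<Rightarrow> real"
    and bhat :: "real^'n"
    and a :: real and r :: nat
  assumes convex: "convex_on UNIV l"
    and grad: "\<And>b. (l has_derivative (\<lambda>h. gradl b \<bullet> h)) (at b)"
    and lam_mono: "\<And>i. 1 \<le> i \<Longrightarrow> i < CARD('n) \<Longrightarrow> lam i \<ge> lam (i + 1)"
    and lam_nonneg: "lam (CARD('n)) \<ge> 0"
    and argmin: "\<And>b. l bhat + slope_pen lam bhat \<le> l b + slope_pen lam b"
    and a_pos: "a > 0"
    and r_range: "r \<in> {1..CARD('n)}"
  shows "card {i. bhat $ i \<noteq> 0} = r \<longleftrightarrow> (- gradl bhat + a *\<^sub>R bhat) \<in> H_set lam r"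
proof -
  have subgradient: "(- gradl bhat) \<bullet> (b - bhat) \<le> slope_pen lam b - slope_pen lam bhat" for b
    using minimizer_variational_inequality[OF grad convex_slope_pen[OF lam_mono lam_nonneg] argmin]
    by (simp add: inner_minus_left)
  note le = shifted_subgradient_exchange_le[OF lam_mono lam_nonneg subgradient less_imp_le[OF a_pos]]
  note less = shifted_subgradient_exchange_less[OF lam_mono lam_nonneg subgradient a_pos]
  show ?thesis by (rule card_eq_iff_in_H_set_if_exchange[where lam = lam, OF lam_mono le less r_range])
qed

end
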